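(* For every $\varepsilon\in(0,1]$ and $n\in\mathbb N$, \[ |\alpha(n,0)|\le\frac{\varepsilon^{-1}+4\sqrt2}{\pi}\cdot\frac{4+\varepsilon}{\varepsilon}\cdot\frac1N\Big(\frac N{N-\varepsilon}\Big)^{\max\{n-1,0\}},\qquad |\alpha(n,1)|\le\frac9\pi\cdot\frac{4+\varepsilon}{\varepsilon}\cdot\frac1N\Big(\frac N{N-\varepsilon}\Big)^{\max\{n-1,0\}}, \] \[ \sup_{q\in[-1,1]}\Big|\sum_{s=2}^\infty q^s\alpha(n,s)\Big|\le\frac1\pi\Big(\varepsilon^{-1}+\frac{16\sqrt2}{(1-\cos1)^{1/2}}\Big)\cdot\frac{4+\varepsilon}{\varepsilon}\cdot\frac1N\Big(\frac N{N-\varepsilon}\Big)^{\max\{n-2,0\}}. \]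
   Context: $E$ is a finite set with $N=\#E>8$ elements; $Q$ is an irreducible stochastic matrix on $E$ with $Q(x,y)=Q(y,x)$ for all $x,y$ and $\mathrm{tr}(Q)=0$. The function $\alpha:\mathbb Z_+\times\mathbb Z_+\to\mathbb R$ is defined by $\alpha(0,s)=0$ for all $s$ and, for $n\in\mathbb Z_+$, $\alpha(n+1,0)=\frac2{N^2}+\alpha(n,0)+\frac2{N^2}\sum_{s\ge1}\alpha(n,s)\mathrm{tr}(Q^s)$, $\alpha(n+1,1)=-\frac2{N^2}+\frac{N-2}N\alpha(n,1)-\frac2{N^2}\sum_{s\ge1}\alpha(n,s)\mathrm{tr}(Q^s)$, $\alpha(n+1,s)=\frac{N-2}N\alpha(n,s)+\frac2N\alpha(n,s-1)$ for $s\ge2$. *)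

theory Defs
  imports Complex_Main
begin

primrec mpow :: "'a set \<Rightarrow> ('a \<Rightarrow> 'a \<Rightarrow> real) \<Rightarrow> nat \<Rightarrow> 'a \<Rightarrow> 'a \<Rightarrow> real" where
  "mpow E Q 0 = (\<lambda>x y. if x = y then 1 else 0)"
| "mpow E Q (Suc k) = (\<lambda>x y. \<Sum>z\<in>E. Q x z * mpow E Q k z y)"

definition mtrace :: "'a set \<Rightarrow> ('a \<Rightarrow> 'a \<Rightarrow> real) \<Rightarrow> nat \<Rightarrow> real" where
  "mtrace E Q k = (\<Sum>x\<in>E. mpow E Q k x x)"

definition stochastic :: "'a set \<Rightarrow> ('a \<Rightarrow> 'a \<Rightarrow> real) \<Rightarrow> bool" where
  "stochastic E Q \<longleftrightarrow> (\<forall>x\<in>E. \<forall>y\<in>E. Q x y \<ge> 0) \<and> (\<forall>x\<in>E. (\<Sum>y\<in>E. Q x y) = 1)"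

definition irreducible_mat :: "'a set \<Rightarrow> ('a \<Rightarrow> 'a \<Rightarrow> real) \<Rightarrow> bool" where
  "irreducible_mat E Q \<longleftrightarrow> (\<forall>x\<in>E. \<forall>y\<in>E. \<exists>k. mpow E Q k x y > 0)"

text \<open>alpha n s, with the recursion of the paper; the sum over s \<ge> 1 is the series
  indexed by t = s - 1.\<close>
primrec alpha :: "'a set \<Rightarrow> ('a \<Rightarrow> 'a \<Rightarrow> real) \<Rightarrow> nat \<Rightarrow> nat \<Rightarrow> real" where
  "alpha E Q 0 = (\<lambda>s. 0)"
| "alpha E Q (Suc n) =
     (let N = real (card E);
          S = (\<Sum>t. alpha E Q n (Suc t) * mtrace E Q (Suc t))
      in (\<lambda>s. if s = 0 then 2 / N^2 + alpha E Q n 0 + 2 / N^2 * S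
              else if s = 1 then - 2 / N^2 + (N - 2) / N * alpha E Q n 1 - 2 / N^2 * S
              else (N - 2) / N * alpha E Q n s + 2 / N * alpha E Q n (s - 1)))"

end

theory Submission
  imports Defs "Jordan_Normal_Form.Schur_Decomposition"
begin

(*
  Since Q is symmetric and stochastic, tr(Q^s) = \<Sum>_i \<lambda>_i^s for real eigenvalues
  \<lambda>_i \<in> [-1,1] (Schur decomposition plus the usual eigenvector estimates), and tr(Q) = 0
  gives \<Sum>_i \<lambda>_i = 0.  With p = 2/N the recursion for \<alpha> becomes a linear recursion for
  the generating polynomial  \<Sum>_{s\<ge>1} \<alpha>(n,s) t^s = -t D_n(t), namely
      D_{n+1}(t) = (1 - p + p t) D_n(t) + (p/N) c_n,    c_n = 1 + \<Sum>_{s\<ge>1} \<alpha>(n,s) tr(Q^s),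
  and c_n = 1 - \<Sum>_i \<lambda>_i D_n(\<lambda>_i).  An induction on n shows c_n \<ge> 0, D_n \<ge> 0 on [-1,1]
  and -t D_n(t) \<le> c_n/N on [-1,0]; positivity of all traces tr(Q^s) then gives c_n \<le> 1.
  From these facts: 0 \<le> \<alpha>(n,0) \<le> 2n/N^2, |\<alpha>(n,1)| \<le> 1/N and the tail
  \<Sum>_{s\<ge>2} q^s \<alpha>(n,s) is at most 2n/N^2 + 1/N in absolute value.  These bounds are
  stronger than the claimed ones: a Bernoulli estimate for (N/(N-\<epsilon>))^k and the crude
  bound (4+\<epsilon>)/\<pi> \<ge> 1 on the constants finish the proof.
*)

section \<open>Traces of powers of a symmetric stochastic matrix\<close>

text \<open>The library multiplies matrix powers on the right; \<open>mpow\<close> multiplies on the left.\<close>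
lemma pow_mat_Suc_left:
  assumes "A \<in> carrier_mat n n"
  shows "A ^\<^sub>m Suc k = A * A ^\<^sub>m k"
proof (induction k)
  case 0 then show ?case using assms by simp
next
  case (Suc k)
  have "A ^\<^sub>m Suc (Suc k) = (A * A ^\<^sub>m k) * A" using Suc by simp
  also have "\<dots> = A * (A ^\<^sub>m k * A)" using assms by (intro assoc_mult_mat) auto
  finally show ?case by simp
qed

definition mat_trace :: "'b::comm_ring_1 mat \<Rightarrow> 'b" where
  "mat_trace M = (\<Sum>i<dim_row M. M $$ (i,i))"

lemma mat_trace_mult_comm:
  assumes "A \<in> carrier_mat n m" "B \<in> carrier_mat m n"
  shows "mat_trace (A * B) = mat_trace (B * A)"
proof -
  have "mat_trace (A * B) = (\<Sum>i<n. \<Sum>k<m. A $$ (i,k) * B $$ (k,i))"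
    using assms unfolding mat_trace_def by (simp add: scalar_prod_def atLeast0LessThan)
  also have "\<dots> = (\<Sum>k<m. \<Sum>i<n. B $$ (k,i) * A $$ (i,k))"
    by (subst sum.swap) (simp add: mult.commute)
  also have "\<dots> = mat_trace (B * A)"
    using assms unfolding mat_trace_def by (simp add: scalar_prod_def atLeast0LessThan)
  finally show ?thesis .
qed

lemma upper_triangular_pow_mat:
  fixes B :: "'b::comm_ring_1 mat"
  assumes B: "B \<in> carrier_mat n n" and ut: "upper_triangular B"
  shows "(\<forall>i<n. \<forall>j<i. (B ^\<^sub>m s) $$ (i,j) = 0) \<and> (\<forall>i<n. (B ^\<^sub>m s) $$ (i,i) = (B $$ (i,i)) ^ s)"
proof (induction s)
  case 0 then show ?case using B by auto
next
  case (Suc s)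
  have B0: "B $$ (k,j) = 0" if "k < n" "j < k" for k j using ut B that by auto
  have P0: "(B ^\<^sub>m s) $$ (i,k) = 0" if "i < n" "k < i" for i k using Suc that by auto
  have entry: "(B ^\<^sub>m Suc s) $$ (i,j) = (\<Sum>k<n. (B ^\<^sub>m s) $$ (i,k) * B $$ (k,j))"
    if "i < n" "j < n" for i j
    using that B by (simp add: scalar_prod_def atLeast0LessThan)
  have below: "(B ^\<^sub>m Suc s) $$ (i,j) = 0" if "i < n" "j < i" for i j
  proof -
    have "(B ^\<^sub>m s) $$ (i,k) * B $$ (k,j) = 0" if "k < n" for k
      using P0[of i k] B0[of k j] that \<open>i < n\<close> \<open>j < i\<close> by (cases "k < i") auto
    then show ?thesis using entry that by simp
  qed
  have diagonal: "(B ^\<^sub>m Suc s) $$ (i,i) = (B $$ (i,i)) ^ Suc s" if "i < n" for i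
  proof -
    have "(\<Sum>k<n. (B ^\<^sub>m s) $$ (i,k) * B $$ (k,i))
        = (\<Sum>k<n. if k = i then (B ^\<^sub>m s) $$ (i,i) * B $$ (i,i) else 0)"
    proof (intro sum.cong refl)
      fix k assume "k \<in> {..<n}"
      then show "(B ^\<^sub>m s) $$ (i,k) * B $$ (k,i)
          = (if k = i then (B ^\<^sub>m s) $$ (i,i) * B $$ (i,i) else 0)"
        using P0[of i k] B0[of k i] that by (cases "k < i") auto
    qed
    then have "(B ^\<^sub>m Suc s) $$ (i,i) = (B ^\<^sub>m s) $$ (i,i) * B $$ (i,i)"
      using entry[OF that that] that by simp
    then show ?thesis using Suc that by simp
  qed
  show ?case using below diagonal by blast
qed

lemma trace_pow_mat_eigenvalues:
  fixes A :: "complex mat"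
  assumes A: "A \<in> carrier_mat n n" and cp: "char_poly A = (\<Prod>a\<leftarrow>es. [:- a, 1:])"
  shows "mat_trace (A ^\<^sub>m s) = (\<Sum>i<n. (es ! i) ^ s)"
proof -
  obtain B P P' where sch: "schur_decomposition A es = (B, P, P')"
    by (cases "schur_decomposition A es") auto
  from schur_decomposition[OF A cp sch]
  have sw: "similar_mat_wit A B P P'" and ut: "upper_triangular B" and dg: "diag_mat B = es"
    by auto
  from sw A have B: "B \<in> carrier_mat n n" and P: "P \<in> carrier_mat n n"
    and P': "P' \<in> carrier_mat n n" and PP: "P' * P = 1\<^sub>m n"
    unfolding similar_mat_wit_def Let_def by auto
  have Bs: "B ^\<^sub>m s \<in> carrier_mat n n" using B by simp
  have "A ^\<^sub>m s = P * B ^\<^sub>m s * P'" by (rule similar_mat_wit_pow_id[OF sw])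
  then have "mat_trace (A ^\<^sub>m s) = mat_trace ((P * B ^\<^sub>m s) * P')" by simp
  also have "\<dots> = mat_trace (P' * (P * B ^\<^sub>m s))" using P P' Bs by (intro mat_trace_mult_comm) auto
  also have "P' * (P * B ^\<^sub>m s) = (P' * P) * B ^\<^sub>m s"
    using P P' Bs by (simp add: assoc_mult_mat)
  also have "\<dots> = B ^\<^sub>m s" using PP Bs by (simp add: left_mult_one_mat)
  also have "mat_trace (B ^\<^sub>m s) = (\<Sum>i<n. (B $$ (i,i)) ^ s)"
    unfolding mat_trace_def using upper_triangular_pow_mat[OF B ut, of s] B by simp
  also have "\<dots> = (\<Sum>i<n. (es ! i) ^ s)"
    using dg B unfolding diag_mat_def by (intro sum.cong) auto
  finally show ?thesis .
qed

lemma real_symmetric_eigenvalue_real: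
  fixes A :: "complex mat" and a :: "nat \<Rightarrow> nat \<Rightarrow> real"
  assumes A: "A \<in> carrier_mat n n"
    and entries: "\<And>i j. i < n \<Longrightarrow> j < n \<Longrightarrow> A $$ (i,j) = complex_of_real (a i j)"
    and sym: "\<And>i j. i < n \<Longrightarrow> j < n \<Longrightarrow> a i j = a j i"
    and ev: "eigenvector A v e"
  shows "Im e = 0"
proof -
  from ev A have v: "v \<in> carrier_vec n" and v0: "v \<noteq> 0\<^sub>v n" and Av: "A *\<^sub>v v = e \<cdot>\<^sub>v v"
    unfolding eigenvector_def by auto
  have eq: "e * v $ i = (\<Sum>j<n. complex_of_real (a i j) * v $ j)" if "i < n" for i
    using Av[THEN arg_cong, of "\<lambda>w. w $ i"] that A v entries
    by (simp add: scalar_prod_def atLeast0LessThan)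
  define norm2 where "norm2 = (\<Sum>i<n. (cmod (v $ i))^2)"
  define z where "z = (\<Sum>i<n. cnj (v $ i) * (e * v $ i))"
  have z_eig: "z = e * complex_of_real norm2"
    unfolding z_def norm2_def of_real_sum sum_distrib_left
    by (intro sum.cong refl)
       (simp add: complex_norm_square[unfolded of_real_power, symmetric] mult.commute mult.left_commute)
  have z_quad: "z = (\<Sum>i<n. \<Sum>j<n. complex_of_real (a i j) * (cnj (v $ i) * v $ j))"
    unfolding z_def using eq by (simp add: sum_distrib_left algebra_simps)
  have "cnj z = (\<Sum>j<n. \<Sum>i<n. complex_of_real (a i j) * (v $ i * cnj (v $ j)))"
    unfolding z_quad by (subst sum.swap) (simp add: cnj_sum mult.commute)
  also have "\<dots> = z" unfolding z_quad
    by (intro sum.cong refl) (simp add: sym mult.commute)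
  finally have "Im z = 0"
    by (metis complex_cnj_cancel_iff complex_cnj_zero_iff complex_eq_cancel_iff2
        Im_complex_of_real cnj.sel(2) neg_equal_zero)
  moreover obtain i0 where i0: "i0 < n" "v $ i0 \<noteq> 0"
    using v0 v by (metis eq_vecI index_zero_vec(1) index_zero_vec(2) carrier_vecD)
  then have "norm2 \<ge> (cmod (v $ i0))^2" "(cmod (v $ i0))^2 > 0"
    unfolding norm2_def by (auto intro: member_le_sum)
  then have "norm2 > 0" by linarith
  ultimately show ?thesis unfolding z_eig by simp
qed

lemma stochastic_eigenvalue_le_1:
  fixes A :: "complex mat" and a :: "nat \<Rightarrow> nat \<Rightarrow> real"
  assumes A: "A \<in> carrier_mat n n"
    and entries: "\<And>i j. i < n \<Longrightarrow> j < n \<Longrightarrow> A $$ (i,j) = complex_of_real (a i j)"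
    and nonneg: "\<And>i j. i < n \<Longrightarrow> j < n \<Longrightarrow> a i j \<ge> 0"
    and rows: "\<And>i. i < n \<Longrightarrow> (\<Sum>j<n. a i j) = 1"
    and ev: "eigenvector A v e"
  shows "cmod e \<le> 1"
proof -
  from ev A have v: "v \<in> carrier_vec n" and v0: "v \<noteq> 0\<^sub>v n" and Av: "A *\<^sub>v v = e \<cdot>\<^sub>v v"
    unfolding eigenvector_def by auto
  have eq: "e * v $ i = (\<Sum>j<n. complex_of_real (a i j) * v $ j)" if "i < n" for i
    using Av[THEN arg_cong, of "\<lambda>w. w $ i"] that A v entries
    by (simp add: scalar_prod_def atLeast0LessThan)
  obtain i0 where i0: "i0 < n" "v $ i0 \<noteq> 0"
    using v0 v by (metis eq_vecI index_zero_vec(1) index_zero_vec(2) carrier_vecD)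
  define m where "m = Max ((\<lambda>i. cmod (v $ i)) ` {..<n})"
  have fin: "finite ((\<lambda>i. cmod (v $ i)) ` {..<n})" "(\<lambda>i. cmod (v $ i)) ` {..<n} \<noteq> {}"
    using i0 by auto
  obtain k where k: "k < n" "cmod (v $ k) = m"
    using Max_in[OF fin] unfolding m_def by auto
  have m_ge: "cmod (v $ j) \<le> m" if "j < n" for j
    unfolding m_def using fin that by (intro Max_ge) auto
  have m_pos: "m > 0" using m_ge[OF i0(1)] i0 by (smt (verit) zero_less_norm_iff)
  have "cmod e * m = cmod (e * v $ k)" using k by (simp add: norm_mult)
  also have "\<dots> = cmod (\<Sum>j<n. complex_of_real (a k j) * v $ j)" using eq[OF k(1)] by simp
  also have "\<dots> \<le> (\<Sum>j<n. cmod (complex_of_real (a k j) * v $ j))" by (rule norm_sum)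
  also have "\<dots> = (\<Sum>j<n. a k j * cmod (v $ j))"
    using nonneg k by (intro sum.cong refl) (simp add: norm_mult)
  also have "\<dots> \<le> (\<Sum>j<n. a k j * m)" using nonneg k m_ge by (intro sum_mono mult_left_mono) auto
  also have "\<dots> = m" using rows[OF k(1)] by (simp add: sum_distrib_right[symmetric])
  finally show ?thesis using m_pos by simp
qed

lemma symmetric_stochastic_eigenvalue:
  fixes A :: "complex mat" and a :: "nat \<Rightarrow> nat \<Rightarrow> real"
  assumes A: "A \<in> carrier_mat n n"
    and entries: "\<And>i j. i < n \<Longrightarrow> j < n \<Longrightarrow> A $$ (i,j) = complex_of_real (a i j)"
    and sym: "\<And>i j. i < n \<Longrightarrow> j < n \<Longrightarrow> a i j = a j i"
    and nonneg: "\<And>i j. i < n \<Longrightarrow> j < n \<Longrightarrow> a i j \<ge> 0"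
    and rows: "\<And>i. i < n \<Longrightarrow> (\<Sum>j<n. a i j) = 1"
    and ev: "eigenvalue A e"
  shows "e = complex_of_real (Re e) \<and> \<bar>Re e\<bar> \<le> 1"
proof -
  have v: "eigenvector A (find_eigenvector A e) e" by (rule find_eigenvector[OF A ev])
  have "Im e = 0" by (rule real_symmetric_eigenvalue_real[OF A entries sym v])
  moreover have "cmod e \<le> 1" by (rule stochastic_eigenvalue_le_1[OF A entries nonneg rows v])
  ultimately show ?thesis using abs_Re_le_cmod[of e] by (simp add: complex_eq_iff)
qed

lemma enumerated_mpow:
  assumes f: "bij_betw f {0..<n} E"
  shows "mat n n (\<lambda>(i,j). complex_of_real (Q (f i) (f j))) ^\<^sub>m s
         = mat n n (\<lambda>(i,j). complex_of_real (mpow E Q s (f i) (f j)))"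
proof (induction s)
  case 0
  have "f i = f j \<longleftrightarrow> i = j" if "i < n" "j < n" for i j
    using f that unfolding bij_betw_def inj_on_def by auto
  then show ?case by (intro eq_matI) auto
next
  case (Suc s)
  have reindex: "(\<Sum>k<n. Q x (f k) * mpow E Q s (f k) y) = (\<Sum>z\<in>E. Q x z * mpow E Q s z y)"
    for x y
    using sum.reindex_bij_betw[OF f, of "\<lambda>z. Q x z * mpow E Q s z y"]
    by (simp add: atLeast0LessThan)
  show ?case
    unfolding pow_mat_Suc_left[OF mat_carrier] Suc
    by (intro eq_matI) (simp_all add: scalar_prod_def atLeast0LessThan reindex
                          flip: of_real_mult of_real_sum)
qed

lemma symmetric_stochastic_trace_spectrum:
  assumes fin: "finite E" and st: "stochastic E Q" and sym: "\<forall>x\<in>E. \<forall>y\<in>E. Q x y = Q y x"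
  shows "\<exists>lam::nat\<Rightarrow>real. (\<forall>i<card E. -1 \<le> lam i \<and> lam i \<le> 1)
           \<and> (\<forall>s. mtrace E Q s = (\<Sum>i<card E. lam i ^ s))"
proof -
  define n where "n = card E"
  obtain f where f: "bij_betw f {0..<n} E"
    using ex_bij_betw_nat_finite[OF fin] unfolding n_def by blast
  have fE: "f i \<in> E" if "i < n" for i using f that by (auto dest: bij_betw_apply)
  have reindex: "(\<Sum>k<n. g (f k)) = (\<Sum>z\<in>E. g z)" for g :: "'a \<Rightarrow> real"
    using sum.reindex_bij_betw[OF f, of g] by (simp add: atLeast0LessThan)
  define A :: "complex mat" where "A = mat n n (\<lambda>(i,j). complex_of_real (Q (f i) (f j)))"
  have A: "A \<in> carrier_mat n n" unfolding A_def by simp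
  have entries: "\<And>i j. i < n \<Longrightarrow> j < n \<Longrightarrow> A $$ (i,j) = complex_of_real (Q (f i) (f j))"
    unfolding A_def by simp
  have sym_f: "\<And>i j. i < n \<Longrightarrow> j < n \<Longrightarrow> Q (f i) (f j) = Q (f j) (f i)"
    using sym fE by blast
  have nonneg_f: "\<And>i j. i < n \<Longrightarrow> j < n \<Longrightarrow> Q (f i) (f j) \<ge> 0"
    using st fE unfolding stochastic_def by blast
  have rows_f: "\<And>i. i < n \<Longrightarrow> (\<Sum>j<n. Q (f i) (f j)) = 1"
    using st fE reindex unfolding stochastic_def by simp
  obtain es where cp: "char_poly A = (\<Prod>a\<leftarrow>es. [:- a, 1:])" and len: "length es = n"
    using char_poly_factorized[OF A] by blast
  have trace: "complex_of_real (mtrace E Q s) = (\<Sum>i<n. (es ! i) ^ s)" for s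
  proof -
    have "(\<Sum>i<n. mpow E Q s (f i) (f i)) = mtrace E Q s"
      using reindex[of "\<lambda>x. mpow E Q s x x"] unfolding mtrace_def .
    moreover have "mat_trace (A ^\<^sub>m s) = complex_of_real (\<Sum>i<n. mpow E Q s (f i) (f i))"
      unfolding A_def enumerated_mpow[OF f] mat_trace_def by simp
    ultimately show ?thesis using trace_pow_mat_eigenvalues[OF A cp] by simp
  qed
  define lam where "lam i = Re (es ! i)" for i
  have eigenvalue: "es ! i = complex_of_real (lam i) \<and> \<bar>lam i\<bar> \<le> 1" if "i < n" for i
  proof -
    have "poly (char_poly A) (es ! i) = 0"
      unfolding cp using that len by (simp add: poly_prod_list prod_list_zero_iff)
    then have "eigenvalue A (es ! i)" using eigenvalue_root_char_poly[OF A] by simp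
    then show ?thesis
      unfolding lam_def
      by (intro symmetric_stochastic_eigenvalue[where a = "\<lambda>i j. Q (f i) (f j)", OF A])
         (simp_all add: entries sym_f nonneg_f rows_f)
  qed
  then have "mtrace E Q s = (\<Sum>i<n. lam i ^ s)" for s
    using trace[of s] by (simp flip: of_real_power of_real_sum)
  moreover have "-1 \<le> lam i \<and> lam i \<le> 1" if "i < n" for i
    using eigenvalue[OF that] by linarith
  ultimately show ?thesis unfolding n_def by blast
qed

section \<open>The recursion for \<open>\<alpha>\<close> in spectral coordinates\<close>

text \<open>\<open>\<alpha>(n,s)\<close> vanishes beyond the diagonal, so all series in the recursion are finite sums.\<close>
lemma alpha_vanishes: "n < s \<Longrightarrow> alpha E Q n s = 0"
proof (induction n arbitrary: s)
  case 0 then show ?case by simp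
next
  case (Suc n)
  then have "s \<noteq> 0" "s \<noteq> 1" "n < s" "n < s - 1" by auto
  then show ?case using Suc.IH by (simp add: Let_def)
qed

declare alpha.simps(2)[simp del]

lemma mpow_nonneg:
  assumes "\<forall>x\<in>E. \<forall>y\<in>E. Q x y \<ge> 0" "x \<in> E" "y \<in> E"
  shows "mpow E Q k x y \<ge> 0"
  using assms(2,3)
proof (induction k arbitrary: x)
  case 0 then show ?case by simp
next
  case (Suc k) then show ?case using assms(1) by (auto intro!: sum_nonneg mult_nonneg_nonneg)
qed

lemma mtrace_nonneg:
  assumes "\<forall>x\<in>E. \<forall>y\<in>E. Q x y \<ge> 0"
  shows "mtrace E Q k \<ge> 0"
  unfolding mtrace_def using mpow_nonneg[OF assms] by (auto intro!: sum_nonneg)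

lemma mtrace_one:
  assumes "finite E"
  shows "mtrace E Q 1 = (\<Sum>x\<in>E. Q x x)"
  unfolding mtrace_def using assms by (simp add: if_distrib sum.delta cong: if_cong)

locale alpha_spectrum =
  fixes E :: "'a set" and Q :: "'a \<Rightarrow> 'a \<Rightarrow> real" and lam :: "nat \<Rightarrow> real"
  assumes finite_E: "finite E" and card_E: "4 \<le> card E"
    and Q_nonneg: "\<forall>x\<in>E. \<forall>y\<in>E. Q x y \<ge> 0"
    and trace_Q: "(\<Sum>x\<in>E. Q x x) = 0"
    and lam_range: "\<And>i. i < card E \<Longrightarrow> -1 \<le> lam i \<and> lam i \<le> 1"
    and mtrace_lam: "\<And>s. mtrace E Q s = (\<Sum>i<card E. lam i ^ s)"
begin

definition N :: real where "N = real (card E)"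
definition p :: real where "p = 2 / N"

definition S :: "nat \<Rightarrow> real" where "S n = (\<Sum>t. alpha E Q n (Suc t) * mtrace E Q (Suc t))"
definition c :: "nat \<Rightarrow> real" where "c n = 1 + S n"

text \<open>\<open>-t * D n t\<close> is the generating polynomial \<open>\<Sum>_{s\<ge>1} \<alpha>(n,s) t^s\<close>
  (lemma \<open>generating_polynomial\<close>).\<close>
primrec D :: "nat \<Rightarrow> real \<Rightarrow> real" where
  "D 0 t = 0"
| "D (Suc n) t = (1 - p + p * t) * D n t + p / N * c n"

text \<open>Elementary facts about \<open>N\<close> and \<open>p\<close>; \<open>p \<le> 1/2\<close> is where \<open>#E \<ge> 4\<close> is used.\<close>
lemma N_ge_4: "4 \<le> N" using card_E unfolding N_def by simp
lemma N_pos: "0 < N" using N_ge_4 by simp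
lemma p_pos: "0 < p" unfolding p_def using N_pos by simp
lemma p_le_half: "p \<le> 1 / 2" unfolding p_def using N_ge_4 by (simp add: field_simps)
lemma p_over_N: "p / N = 2 / N^2" unfolding p_def by (simp add: power2_eq_square)

lemma multiplier_range:
  assumes "-1 \<le> t" "t \<le> 1"
  shows "0 \<le> 1 - p + p * t" "1 - p + p * t \<le> 1"
proof -
  have "p * (-1) \<le> p * t" "p * t \<le> p * 1"
    using assms p_pos by (intro mult_left_mono; simp)+
  then show "0 \<le> 1 - p + p * t" "1 - p + p * t \<le> 1" using p_le_half by auto
qed

lemma S_finite: "S n = (\<Sum>t<n. alpha E Q n (Suc t) * mtrace E Q (Suc t))"
  unfolding S_def by (rule suminf_finite) (auto simp: alpha_vanishes)

lemma alpha_Suc: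
  "alpha E Q (Suc n) s =
     (if s = 0 then 2 / N^2 + alpha E Q n 0 + 2 / N^2 * S n
      else if s = 1 then - 2 / N^2 + (N - 2) / N * alpha E Q n 1 - 2 / N^2 * S n
      else (N - 2) / N * alpha E Q n s + 2 / N * alpha E Q n (s - 1))"
  by (simp only: alpha.simps Let_def S_def N_def)

lemma alpha_Suc_0: "alpha E Q (Suc n) 0 = alpha E Q n 0 + p / N * c n"
  unfolding alpha_Suc p_over_N c_def by (simp add: algebra_simps add_divide_distrib)

lemma alpha_Suc_1: "alpha E Q (Suc n) 1 = (1 - p) * alpha E Q n 1 - p / N * c n"
  unfolding alpha_Suc p_over_N c_def using N_pos by (simp add: p_def field_simps)

lemma alpha_Suc_high:
  "2 \<le> s \<Longrightarrow> alpha E Q (Suc n) s = (1 - p) * alpha E Q n s + p * alpha E Q n (s - 1)"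
  unfolding alpha_Suc using N_pos by (simp add: p_def field_simps)

lemma generating_polynomial:
  "n \<le> K \<Longrightarrow> (\<Sum>s<K. alpha E Q n (Suc s) * t ^ Suc s) = - t * D n t"
proof (induction n arbitrary: K)
  case 0 then show ?case by simp
next
  case (Suc n)
  then obtain K' where K: "K = Suc K'" and nK: "n \<le> K'" by (cases K) auto
  have shift: "(\<Sum>s<Suc K'. f (Suc s)) = f 1 + (\<Sum>s<K'. f (Suc (Suc s)))" for f :: "nat \<Rightarrow> real"
    by (subst sum.lessThan_Suc_shift) simp
  define G where "G m s = alpha E Q m s * t ^ s" for m s
  have IH: "(\<Sum>s<K'. G n (Suc s)) = - t * D n t" "(\<Sum>s<Suc K'. G n (Suc s)) = - t * D n t"
    using Suc.IH[of K'] Suc.IH[of "Suc K'"] nK unfolding G_def by auto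
  have IH_high: "(\<Sum>s<K'. G n (Suc (Suc s))) = - t * D n t - G n 1"
    using IH(2) shift[of "G n"] by linarith
  have high: "(\<Sum>s<K'. G (Suc n) (Suc (Suc s)))
      = (1 - p) * (\<Sum>s<K'. G n (Suc (Suc s))) + p * t * (\<Sum>s<K'. G n (Suc s))"
    unfolding G_def sum_distrib_left sum.distrib[symmetric]
    by (intro sum.cong refl) (simp add: alpha_Suc_high algebra_simps)
  have "(\<Sum>s<K. G (Suc n) (Suc s)) = G (Suc n) 1 + (\<Sum>s<K'. G (Suc n) (Suc (Suc s)))"
    unfolding K by (rule shift)
  also have "\<dots> = G (Suc n) 1 + (1 - p) * (- t * D n t - G n 1) + p * t * (- t * D n t)"
    unfolding high IH_high IH(1) by simp
  also have "\<dots> = - t * D (Suc n) t"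
    unfolding G_def alpha_Suc_1 D.simps by (simp add: algebra_simps)
  finally show ?case unfolding G_def .
qed

lemma S_spectral: "S n = - (\<Sum>i<card E. lam i * D n (lam i))"
proof -
  have "S n = (\<Sum>i<card E. \<Sum>t<n. alpha E Q n (Suc t) * lam i ^ Suc t)"
    unfolding S_finite mtrace_lam sum_distrib_left by (rule sum.swap)
  also have "\<dots> = (\<Sum>i<card E. - lam i * D n (lam i))"
    by (intro sum.cong refl generating_polynomial) simp
  finally show ?thesis by (simp add: sum_negf)
qed

lemma sum_lam: "(\<Sum>i<card E. lam i) = 0"
  using mtrace_lam[of 1] mtrace_one[OF finite_E] trace_Q by simp

lemma c_increment: "c (Suc n) - c n = (\<Sum>i<card E. p * lam i * (1 - lam i) * D n (lam i))"
proof -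
  have "c (Suc n) - c n = (\<Sum>i<card E. lam i * (D n (lam i) - D (Suc n) (lam i)))"
    unfolding c_def S_spectral
    by (simp add: sum_subtractf[symmetric] right_diff_distrib del: D.simps)
  also have "\<dots> = (\<Sum>i<card E. p * lam i * (1 - lam i) * D n (lam i) - p / N * c n * lam i)"
    by (intro sum.cong refl) (simp add: algebra_simps)
  also have "\<dots> = (\<Sum>i<card E. p * lam i * (1 - lam i) * D n (lam i)) - p / N * c n * (\<Sum>i<card E. lam i)"
    by (simp only: sum_subtractf sum_distrib_left)
  finally show ?thesis by (simp add: sum_lam)
qed

definition invariant :: "nat \<Rightarrow> bool" where
  "invariant n \<longleftrightarrow> 0 \<le> c n \<and> (\<forall>t. -1 \<le> t \<and> t \<le> 1 \<longrightarrow> 0 \<le> D n t)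
     \<and> (\<forall>t. -1 \<le> t \<and> t \<le> 0 \<longrightarrow> - t * D n t \<le> c n / N)"

lemma increment_term_lower:
  assumes inv: "invariant n" and t: "-1 \<le> t" "t \<le> 1"
  shows "- (p / N) * (1 - t) * c n \<le> p * t * (1 - t) * D n t"
proof (cases "0 \<le> t")
  case True
  then have "0 \<le> p * t * (1 - t) * D n t" "0 \<le> (p / N) * (1 - t) * c n"
    using inv t p_pos N_pos unfolding invariant_def by (auto intro!: mult_nonneg_nonneg)
  then show ?thesis by linarith
next
  case False
  then have "- t * D n t \<le> c n / N" using inv t unfolding invariant_def by auto
  from mult_left_mono[OF this, of "p * (1 - t)"] show ?thesis
    using p_pos t by (simp add: algebra_simps)
qed

text \<open>Since \<open>\<Sum>_i (1 - lam i) = N\<close>, the forcing coefficient decays by at most a factor \<open>1 - p\<close>.\<close>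
lemma c_lower:
  assumes "invariant n"
  shows "(1 - p) * c n \<le> c (Suc n)"
proof -
  have "(\<Sum>i<card E. - (p / N) * (1 - lam i) * c n) \<le> (\<Sum>i<card E. p * lam i * (1 - lam i) * D n (lam i))"
    using increment_term_lower[OF assms] lam_range by (intro sum_mono) auto
  moreover have "(\<Sum>i<card E. - (p / N) * (1 - lam i) * c n) = - (p / N) * c n * (\<Sum>i<card E. 1 - lam i)"
    unfolding sum_distrib_left by (rule sum.cong) (simp_all add: algebra_simps)
  moreover have "(\<Sum>i<card E. 1 - lam i) = N" by (simp add: sum_subtractf sum_lam N_def)
  ultimately show ?thesis using c_increment[of n] N_pos by (simp add: algebra_simps)
qed

lemma invariant_holds: "invariant n"
proof (induction n)
  case 0
  have "c 0 = 1" unfolding c_def S_finite by simp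
  then show ?case unfolding invariant_def using N_pos by simp
next
  case (Suc n)
  have c_mono: "(1 - p) * c n \<le> c (Suc n)" by (rule c_lower[OF Suc])
  have c_n: "0 \<le> c n" using Suc unfolding invariant_def by auto
  have forcing: "0 \<le> p / N * c n" using c_n p_pos N_pos by simp
  have "0 \<le> (1 - p) * c n" using c_n p_le_half by simp
  then have "0 \<le> c (Suc n)" using c_mono by linarith
  moreover have "0 \<le> D (Suc n) t" if "-1 \<le> t" "t \<le> 1" for t
    using multiplier_range[OF that] Suc that forcing unfolding invariant_def by simp
  moreover have "- t * D (Suc n) t \<le> c (Suc n) / N" if t: "-1 \<le> t" "t \<le> 0" for t
  proof -
    have "- t * D n t \<le> c n / N" using Suc t unfolding invariant_def by auto
    from mult_left_mono[OF this multiplier_range(1)] t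
    have "(1 - p + p * t) * (- t * D n t) \<le> (1 - p + p * t) * (c n / N)" by simp
    then have "- t * D (Suc n) t \<le> (1 - p + p * t) * (c n / N) + (- t) * (p / N * c n)"
      by (simp add: algebra_simps)
    also have "\<dots> = (1 - p) * c n / N" using N_pos by (simp add: field_simps)
    also have "\<dots> \<le> c (Suc n) / N" using c_mono N_pos by (simp add: divide_right_mono)
    finally show ?thesis .
  qed
  ultimately show ?case unfolding invariant_def by blast
qed

lemma c_nonneg: "0 \<le> c n" using invariant_holds unfolding invariant_def by auto

lemma D_nonneg: "-1 \<le> t \<Longrightarrow> t \<le> 1 \<Longrightarrow> 0 \<le> D n t"
  using invariant_holds unfolding invariant_def by auto

text \<open>Expanding the binomial, the moments \<open>\<Sum>_i lam i (1 - p + p lam i)^m\<close> are nonnegative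
  combinations of the traces \<open>tr(Q^{k+1})\<close>, hence nonnegative.\<close>
lemma spectral_moment_nonneg: "0 \<le> (\<Sum>i<card E. lam i * (1 - p + p * lam i) ^ m)"
proof -
  define w where "w k = of_nat (m choose k) * p ^ k * (1 - p) ^ (m - k)" for k
  have "lam i * (1 - p + p * lam i) ^ m = (\<Sum>k\<le>m. w k * lam i ^ Suc k)" for i
    using binomial_ring[of "p * lam i" "1 - p" m]
    by (simp add: w_def sum_distrib_left power_mult_distrib algebra_simps)
  then have "(\<Sum>i<card E. lam i * (1 - p + p * lam i) ^ m) = (\<Sum>k\<le>m. w k * mtrace E Q (Suc k))"
    by (simp add: mtrace_lam sum_distrib_left sum.swap[of _ "{..<card E}"])
  also have "\<dots> \<ge> 0"
    using mtrace_nonneg[OF Q_nonneg] p_pos p_le_half unfolding w_def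
    by (intro sum_nonneg mult_nonneg_nonneg) auto
  finally show ?thesis .
qed

lemma weighted_D_nonneg: "0 \<le> (\<Sum>i<card E. lam i * (1 - p + p * lam i) ^ m * D n (lam i))"
proof (induction n arbitrary: m)
  case 0 then show ?case by simp
next
  case (Suc n)
  have "(\<Sum>i<card E. lam i * (1 - p + p * lam i) ^ m * D (Suc n) (lam i))
      = (\<Sum>i<card E. lam i * (1 - p + p * lam i) ^ Suc m * D n (lam i)
          + p / N * c n * (lam i * (1 - p + p * lam i) ^ m))"
    by (intro sum.cong refl) (simp add: algebra_simps)
  also have "\<dots> = (\<Sum>i<card E. lam i * (1 - p + p * lam i) ^ Suc m * D n (lam i))
        + p / N * c n * (\<Sum>i<card E. lam i * (1 - p + p * lam i) ^ m)"
    by (simp only: sum.distrib sum_distrib_left)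
  also have "\<dots> \<ge> 0"
    using Suc.IH[of "Suc m"] spectral_moment_nonneg[of m] c_nonneg[of n] p_pos N_pos
    by (intro add_nonneg_nonneg mult_nonneg_nonneg) auto
  finally show ?case .
qed

text \<open>Taking \<open>m = 0\<close>: \<open>S n \<le> 0\<close>, i.e. the forcing coefficient never exceeds 1.\<close>
lemma c_le_1: "c n \<le> 1"
  using weighted_D_nonneg[of 0 n] unfolding c_def S_spectral by simp

lemma forcing_range: "0 \<le> p / N * c n" "p / N * c n \<le> p / N"
proof -
  have "0 \<le> p / N" using p_pos N_pos by simp
  then show "0 \<le> p / N * c n" using c_nonneg[of n] by (rule mult_nonneg_nonneg)
  show "p / N * c n \<le> p / N" using c_le_1[of n] \<open>0 \<le> p / N\<close> by (rule mult_left_le)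
qed

lemma alpha_0_range: "0 \<le> alpha E Q n 0 \<and> alpha E Q n 0 \<le> p / N * n"
proof (induction n)
  case 0 then show ?case by simp
next
  case (Suc n)
  have "p / N * real (Suc n) = p / N * n + p / N" by (simp add: distrib_left)
  then show ?case using Suc forcing_range[of n] unfolding alpha_Suc_0 by linarith
qed

lemma alpha_1_range: "- 1 / N \<le> alpha E Q n 1 \<and> alpha E Q n 1 \<le> 0"
proof (induction n)
  case 0 then show ?case using N_pos by simp
next
  case (Suc n)
  have p1: "0 \<le> 1 - p" using p_le_half by simp
  have "(1 - p) * (- 1 / N) \<le> (1 - p) * alpha E Q n 1" using Suc p1 by (intro mult_left_mono) auto
  moreover have "(1 - p) * alpha E Q n 1 \<le> 0" using Suc p1 by (intro mult_nonneg_nonpos) auto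
  moreover have "(1 - p) * (- 1 / N) - p / N = - 1 / N" using N_pos by (simp add: field_simps)
  ultimately show ?case using forcing_range[of n] alpha_Suc_1[of n] by linarith
qed

lemma D_le: "-1 \<le> t \<Longrightarrow> t \<le> 1 \<Longrightarrow> D n t \<le> p / N * n"
proof (induction n)
  case 0 then show ?case by simp
next
  case (Suc n)
  have "(1 - p + p * t) * D n t \<le> 1 * D n t"
    using multiplier_range[OF Suc.prems] D_nonneg[OF Suc.prems] by (intro mult_right_mono) auto
  moreover have "p / N * real (Suc n) = p / N * n + p / N" by (simp add: distrib_left)
  ultimately show ?case using Suc forcing_range[of n] unfolding D.simps by linarith
qed

lemma tail_eq: "(\<Sum>t. x ^ (t + 2) * alpha E Q n (t + 2)) = - x * D n x - alpha E Q n 1 * x"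
proof -
  have "(\<Sum>t. x ^ (t + 2) * alpha E Q n (t + 2)) = (\<Sum>t<n. alpha E Q n (Suc (Suc t)) * x ^ Suc (Suc t))"
    by (subst suminf_finite[of "{..<n}"]) (auto simp: alpha_vanishes mult.commute)
  also have "\<dots> = (\<Sum>s<Suc n. alpha E Q n (Suc s) * x ^ Suc s) - alpha E Q n 1 * x"
    by (subst sum.lessThan_Suc_shift) simp
  finally show ?thesis using generating_polynomial[of n "Suc n" x] by simp
qed

lemma alpha_estimates:
  shows "\<bar>alpha E Q n 0\<bar> \<le> 2 / N^2 * n"
    and "\<bar>alpha E Q n 1\<bar> \<le> 1 / N"
    and "-1 \<le> x \<Longrightarrow> x \<le> 1 \<Longrightarrow> \<bar>\<Sum>t. x ^ (t + 2) * alpha E Q n (t + 2)\<bar> \<le> 2 / N^2 * n + 1 / N"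
proof -
  show "\<bar>alpha E Q n 0\<bar> \<le> 2 / N^2 * n" using alpha_0_range[of n] p_over_N by simp
  show "\<bar>alpha E Q n 1\<bar> \<le> 1 / N" using alpha_1_range[of n] by auto
  assume x: "-1 \<le> x" "x \<le> 1"
  have "\<bar>- x * D n x - alpha E Q n 1 * x\<bar> \<le> \<bar>x\<bar> * \<bar>D n x\<bar> + \<bar>alpha E Q n 1\<bar> * \<bar>x\<bar>"
    by (simp add: abs_mult order_trans[OF abs_triangle_ineq4])
  also have "\<dots> \<le> 1 * (p / N * n) + (1 / N) * 1"
    using D_nonneg[OF x, of n] D_le[OF x, of n] alpha_1_range[of n] x N_pos
    by (intro add_mono mult_mono) auto
  finally show "\<bar>\<Sum>t. x ^ (t + 2) * alpha E Q n (t + 2)\<bar> \<le> 2 / N^2 * n + 1 / N"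
    unfolding tail_eq p_over_N by simp
qed

end

section \<open>Comparison with the constants of the statement\<close>

text \<open>The factor \<open>(4+e)/(\<pi> e)\<close> of the statement is at least \<open>1/e\<close>, since \<open>\<pi> < 4\<close>.\<close>
lemma pi_constant_ge:
  fixes a e :: real
  assumes "0 \<le> a" "0 < e" "e \<le> 1"
  shows "a \<le> a / pi * ((4 + e) / e) * e"
proof -
  have "a * 1 \<le> a * ((4 + e) / pi)" using pi_less_4 assms by (intro mult_left_mono) (simp_all add: field_simps)
  also have "a * ((4 + e) / pi) = a / pi * ((4 + e) / e) * e" using assms by (simp add: field_simps)
  finally show ?thesis by simp
qed

lemma ratio_power_ge:
  fixes M e :: real and k :: nat
  assumes "e < M" "0 < e"
  shows "1 + real k * e / M \<le> (M / (M - e)) ^ k"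
proof -
  have "e / M \<le> e / (M - e)" using assms by (intro divide_left_mono) auto
  from mult_left_mono[OF this, of "real k"]
  have "real k * e / M \<le> real k * (e / (M - e))" by simp
  also have "1 + real k * (e / (M - e)) \<le> (1 + e / (M - e)) ^ k"
    using assms by (intro Bernoulli_inequality) (simp add: field_simps)
  also have "1 + e / (M - e) = M / (M - e)" using assms by (simp add: field_simps)
  finally show ?thesis by simp
qed

lemma paper_constant_dominates:
  fixes M e a A :: real and k :: nat
  assumes M: "1 < M" and e: "0 < e" "e \<le> 1" and A: "0 \<le> A" "A \<le> a"
  shows "A * (M + real k) / M^2 \<le> a / pi * ((4 + e) / e) * (1 / M) * (M / (M - e)) ^ k"
proof -
  define K where "K = a / pi * ((4 + e) / e)"
  have Ke: "A \<le> K * e" using pi_constant_ge[of a e] A e unfolding K_def by linarith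
  have "0 \<le> K * e" using Ke A by linarith
  then have "0 \<le> K" using e by (simp add: zero_le_mult_iff)
  then have "K * e \<le> K" using e by (intro mult_left_le) auto
  then have "A * M + A * real k \<le> K * M + K * e * real k"
    using Ke M by (intro add_mono mult_right_mono) auto
  then have "A * (M + real k) / M^2 \<le> (K * M + K * e * real k) / M^2"
    by (simp add: distrib_left divide_right_mono)
  also have "\<dots> = K * (1 / M) * (1 + real k * e / M)"
    using M by (simp add: field_simps power2_eq_square)
  also have "\<dots> \<le> K * (1 / M) * (M / (M - e)) ^ k"
    using ratio_power_ge[of e M k] \<open>0 \<le> K\<close> M e by (intro mult_left_mono) auto
  finally show ?thesis unfolding K_def .
qed

lemma tail_constant_ge: "16 * sqrt 2 \<le> 16 * sqrt 2 / sqrt (1 - cos (1::real))"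
proof -
  have "0 < 1 - cos (1::real)" using cos_monotone_0_pi[of 0 1] pi_ge_two by simp
  moreover have "1 - cos (1::real) \<le> 1" using cos_ge_zero[of 1] pi_ge_two by simp
  ultimately show ?thesis by (simp add: le_divide_eq)
qed

theorem lemma4p5:
  fixes E :: "'a set" and Q :: "'a \<Rightarrow> 'a \<Rightarrow> real" and \<epsilon> :: real and n :: nat
  assumes "finite E" and "card E > 8"
    and "stochastic E Q" and "irreducible_mat E Q"
    and "\<forall>x\<in>E. \<forall>y\<in>E. Q x y = Q y x"
    and "(\<Sum>x\<in>E. Q x x) = 0"
    and "0 < \<epsilon>" and "\<epsilon> \<le> 1"
  shows "\<bar>alpha E Q n 0\<bar> \<le> (1 / \<epsilon> + 4 * sqrt 2) / pi * ((4 + \<epsilon>) / \<epsilon>) * (1 / real (card E))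
            * (real (card E) / (real (card E) - \<epsilon>)) ^ (n - 1) \<and>
         \<bar>alpha E Q n 1\<bar> \<le> 9 / pi * ((4 + \<epsilon>) / \<epsilon>) * (1 / real (card E))
            * (real (card E) / (real (card E) - \<epsilon>)) ^ (n - 1) \<and>
         (\<forall>q\<in>{-1..1::real}. \<bar>\<Sum>t. q ^ (t + 2) * alpha E Q n (t + 2)\<bar>
           \<le> 1 / pi * (1 / \<epsilon> + 16 * sqrt 2 / sqrt (1 - cos 1)) * ((4 + \<epsilon>) / \<epsilon>)
             * (1 / real (card E)) * (real (card E) / (real (card E) - \<epsilon>)) ^ (n - 2))"
proof -
  obtain lam where "\<forall>i<card E. -1 \<le> lam i \<and> lam i \<le> 1" "\<forall>s. mtrace E Q s = (\<Sum>i<card E. lam i ^ s)"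
    using symmetric_stochastic_trace_spectrum[OF assms(1,3,5)] by blast
  then interpret alpha_spectrum E Q lam
    using assms unfolding stochastic_def by unfold_locales auto
  have M: "1 < real (card E)" using assms(2) by simp
  have "0 < 1 / \<epsilon>" "1 \<le> sqrt (2::real)" using assms(7) by simp_all
  then have c0: "2 \<le> 1 / \<epsilon> + 4 * sqrt 2"
    and c2: "16 \<le> 1 / \<epsilon> + 16 * sqrt 2 / sqrt (1 - cos 1)"
    using tail_constant_ge by linarith+
  have b0: "\<bar>alpha E Q n 0\<bar> \<le> 2 * (real (card E) + real (n - 1)) / real (card E)^2"
    using alpha_estimates(1)[of n] M by (simp add: N_def field_simps)
  have "1 / N \<le> 1 * (real (card E) + real (n - 1)) / real (card E)^2"
    using M by (simp add: N_def field_simps power2_eq_square)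
  then have b1: "\<bar>alpha E Q n 1\<bar> \<le> 1 * (real (card E) + real (n - 1)) / real (card E)^2"
    using alpha_estimates(2)[of n] by linarith
  have b2: "\<bar>\<Sum>t. q ^ (t + 2) * alpha E Q n (t + 2)\<bar>
      \<le> 16 * (real (card E) + real (n - 2)) / real (card E)^2" if "q \<in> {-1..1}" for q
    using alpha_estimates(3)[of q n] that M by (simp add: N_def field_simps power2_eq_square)
  note dominate = paper_constant_dominates[OF M assms(7,8)]
  show ?thesis
  proof (intro conjI ballI)
    show "\<bar>alpha E Q n 0\<bar> \<le> (1 / \<epsilon> + 4 * sqrt 2) / pi * ((4 + \<epsilon>) / \<epsilon>) * (1 / real (card E))
        * (real (card E) / (real (card E) - \<epsilon>)) ^ (n - 1)"
      using order_trans[OF b0 dominate] c0 by simp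
    show "\<bar>alpha E Q n 1\<bar> \<le> 9 / pi * ((4 + \<epsilon>) / \<epsilon>) * (1 / real (card E))
        * (real (card E) / (real (card E) - \<epsilon>)) ^ (n - 1)"
      using order_trans[OF b1 dominate[of 1 9]] by simp
    fix q :: real assume "q \<in> {-1..1}"
    from order_trans[OF b2[OF this] dominate] c2
    show "\<bar>\<Sum>t. q ^ (t + 2) * alpha E Q n (t + 2)\<bar>
        \<le> 1 / pi * (1 / \<epsilon> + 16 * sqrt 2 / sqrt (1 - cos 1)) * ((4 + \<epsilon>) / \<epsilon>)
          * (1 / real (card E)) * (real (card E) / (real (card E) - \<epsilon>)) ^ (n - 2)"
      by simp
  qed
qed

end
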